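(* Let $G$ be a finite nilpotent group and let $M,N$ be normal subgroups with $1<M\le N<G$ such that every $g\in G\setminus N$ is conjugate in $G$ to every element of $gM$. Then there is a prime $p$ such that both $M$ and $G/N$ are $p$-groups. *)

theory Defs
  imports "HOL-Algebra.Algebra" "HOL-Computational_Algebra.Primes"
begin

definition commutator_subgroup :: "('a, 'b) monoid_scheme \<Rightarrow> 'a set \<Rightarrow> 'a set \<Rightarrow> 'a set" where
  "commutator_subgroup G H K = generate G
     (\<Union>h \<in> H. \<Union>k \<in> K. {h \<otimes>\<^bsub>G\<^esub> k \<otimes>\<^bsub>G\<^esub> inv\<^bsub>G\<^esub> h \<otimes>\<^bsub>G\<^esub> inv\<^bsub>G\<^esub> k})"

fun lower_central :: "('a, 'b) monoid_scheme \<Rightarrow> nat \<Rightarrow> 'a set" where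
  "lower_central G 0 = carrier G"
| "lower_central G (Suc n) = commutator_subgroup G (lower_central G n) (carrier G)"

definition nilpotent_group :: "('a, 'b) monoid_scheme \<Rightarrow> bool" where
  "nilpotent_group G \<longleftrightarrow> group G \<and> (\<exists>n. lower_central G n = {\<one>\<^bsub>G\<^esub>})"

definition p_group :: "nat \<Rightarrow> ('a, 'b) monoid_scheme \<Rightarrow> bool" where
  "p_group p G \<longleftrightarrow> group G \<and> finite (carrier G) \<and> (\<exists>k. card (carrier G) = p ^ k)"

definition conjugate_in :: "('a, 'b) monoid_scheme \<Rightarrow> 'a \<Rightarrow> 'a \<Rightarrow> bool" where
  "conjugate_in G x y \<longleftrightarrow> (\<exists>h \<in> carrier G. y = h \<otimes>\<^bsub>G\<^esub> x \<otimes>\<^bsub>G\<^esub> inv\<^bsub>G\<^esub> h)"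

end

theory Submission
  imports Defs
begin

text \<open>Let \<open>p\<close> be a prime dividing \<open>|G : N|\<close>. A Sylow \<open>p\<close>-subgroup is not contained in \<open>N\<close>,
  which yields \<open>g \<notin> N\<close> with \<open>g ^ q = 1\<close> for a power \<open>q\<close> of \<open>p\<close>; every element of \<open>gM\<close> is
  conjugate to \<open>g\<close>, so \<open>(gy) ^ q = 1\<close> for \<open>y \<in> M\<close>. For \<open>y \<in> \<gamma>\<^sub>i \<inter> M\<close> the commutator \<open>[y, g]\<close>
  lies in \<open>\<gamma>\<^sub>i\<^sub>+\<^sub>1 \<inter> M\<close>, so modulo this normal subgroup \<open>y\<close> commutes with \<open>g\<close> and
  \<open>y ^ q \<in> \<gamma>\<^sub>i\<^sub>+\<^sub>1 \<inter> M\<close>. Descending the lower central series, \<open>M\<close> has \<open>p\<close>-power exponent, hence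
  is a \<open>p\<close>-group. As \<open>M \<noteq> 1\<close>, this can hold for one prime only, so \<open>p\<close> is the only prime
  dividing \<open>|G : N|\<close>.\<close>

lemma (in group) inv_mult_cancel_left [simp]:
  "x \<in> carrier G \<Longrightarrow> y \<in> carrier G \<Longrightarrow> inv x \<otimes> (x \<otimes> y) = y"
  by (simp add: m_assoc [symmetric])

lemma (in group) commutator_subgroup_normal:
  assumes "H \<lhd> G"
  shows "commutator_subgroup G H (carrier G) \<lhd> G"
proof -
  interpret H: normal H G using assms .
  show ?thesis
    unfolding commutator_subgroup_def
  proof (rule normal_generateI)
    show "(\<Union>h\<in>H. \<Union>k\<in>carrier G. {h \<otimes> k \<otimes> inv h \<otimes> inv k}) \<subseteq> carrier G"
      using H.subset by auto
  next
    fix c g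
    assume "c \<in> (\<Union>h\<in>H. \<Union>k\<in>carrier G. {h \<otimes> k \<otimes> inv h \<otimes> inv k})" and g: "g \<in> carrier G"
    then obtain h k where h: "h \<in> H" and k: "k \<in> carrier G" and c: "c = h \<otimes> k \<otimes> inv h \<otimes> inv k"
      by auto
    have hG: "h \<in> carrier G" using h H.subset by auto
    have "g \<otimes> c \<otimes> inv g =
        (g \<otimes> h \<otimes> inv g) \<otimes> (g \<otimes> k \<otimes> inv g) \<otimes> inv (g \<otimes> h \<otimes> inv g) \<otimes> inv (g \<otimes> k \<otimes> inv g)"
      using hG k g by (simp add: c m_assoc inv_mult_group)
    moreover have "g \<otimes> h \<otimes> inv g \<in> H" using h H.inv_op_closed2[OF g] by blast
    ultimately show "g \<otimes> c \<otimes> inv g \<in> (\<Union>h\<in>H. \<Union>k\<in>carrier G. {h \<otimes> k \<otimes> inv h \<otimes> inv k})"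
      using g k by blast
  qed
qed

lemma (in group) lower_central_normal: "lower_central G i \<lhd> G"
  by (induction i) (auto simp: normal_self commutator_subgroup_normal)

lemma (in group) commutator_in_lower_central_Suc:
  assumes "y \<in> lower_central G i" "x \<in> carrier G"
  shows "y \<otimes> x \<otimes> inv y \<otimes> inv x \<in> lower_central G (Suc i)"
  using assms unfolding lower_central.simps commutator_subgroup_def
  by (auto intro!: generate.incl)

lemma (in group) commutator_in_normal:
  assumes "M \<lhd> G" "y \<in> M" "x \<in> carrier G"
  shows "y \<otimes> x \<otimes> inv y \<otimes> inv x \<in> M"
proof -
  interpret M: normal M G using assms(1) .
  have yG: "y \<in> carrier G" using assms(2) M.subset by blast
  have "x \<otimes> inv y \<otimes> inv x \<in> M" using M.inv_op_closed2[OF assms(3)] assms(2) by blast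
  then have "y \<otimes> (x \<otimes> inv y \<otimes> inv x) \<in> M" using assms(2) by blast
  then show ?thesis using yG assms(3) by (simp add: m_assoc)
qed

lemma (in group) subgroup_nat_pow_card_eq_one:
  assumes "finite (carrier G)" "subgroup H G" "x \<in> H"
  shows "x [^] card H = \<one>"
proof -
  interpret H: group "G\<lparr>carrier := H\<rparr>"
    using subgroup.subgroup_is_group[OF assms(2)] is_group by blast
  have "x [^]\<^bsub>G\<lparr>carrier := H\<rparr>\<^esub> order (G\<lparr>carrier := H\<rparr>) = \<one>"
    using H.pow_order_eq_1 assms(3) by simp
  then show ?thesis by (simp add: order_def nat_pow_consistent [symmetric])
qed

lemma (in group) eq_one_if_coprime_nat_pow_eq_one:
  assumes "x \<in> carrier G" "x [^] (a::nat) = \<one>" "x [^] (b::nat) = \<one>" "coprime a b"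
  shows "x = \<one>"
proof -
  have "ord x dvd a" "ord x dvd b" using assms pow_eq_id by auto
  then have "ord x dvd 1" using assms(4) by (metis coprime_common_divisor_nat nat_dvd_1_iff_1)
  then have "x [^] (1::nat) = \<one>" using pow_eq_id assms(1) by blast
  then show ?thesis using assms(1) by simp
qed

text \<open>A Sylow \<open>q\<close>-subgroup for a prime \<open>q \<noteq> p\<close> would be nontrivial, yet its elements have
  orders dividing both \<open>q\<^sup>a\<close> and \<open>p\<^sup>e\<close>.\<close>

lemma (in group) order_prime_power_if_nat_pow_eq_one:
  assumes fin: "finite (carrier G)" and p: "Factorial_Ring.prime p"
    and exp: "\<And>x. x \<in> carrier G \<Longrightarrow> x [^] (p ^ e) = \<one>"
  shows "\<exists>k. order G = p ^ k"
proof (rule ccontr)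
  assume "\<nexists>k. order G = p ^ k"
  moreover have "order G \<noteq> 0" using fin by (auto simp: order_def)
  ultimately obtain q where q: "Factorial_Ring.prime q" "q dvd order G" "q \<noteq> p"
    using Ex_other_prime_factor[of "order G" p] p by auto
  define a where "a = multiplicity q (order G)"
  obtain m where "order G = q ^ a * m"
    using multiplicity_dvd[of q "order G"] a_def by (metis dvdE)
  then obtain H where H: "subgroup H G" "card H = q ^ a"
    using sylow_thm[OF q(1) is_group _ fin] by blast
  have "a \<ge> 1" unfolding a_def using q \<open>order G \<noteq> 0\<close>
    by (intro multiplicity_geI) (auto simp: prime_def)
  then have "1 < card H" unfolding H(2) using prime_gt_1_nat[OF q(1)] by (intro one_less_power) auto
  moreover have "H \<subseteq> {\<one>}"
  proof
    fix y assume y: "y \<in> H"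
    then have yG: "y \<in> carrier G" using H(1) subgroup.subset by blast
    have "coprime (p ^ e) (q ^ a)" using primes_coprime[OF p q(1)] q(3) by simp
    moreover have "y [^] (q ^ a) = \<one>"
      using subgroup_nat_pow_card_eq_one[OF fin H(1) y] H(2) by simp
    ultimately have "y = \<one>"
      using eq_one_if_coprime_nat_pow_eq_one[OF yG exp[OF yG]] by blast
    then show "y \<in> {\<one>}" by simp
  qed
  then have "H = {\<one>}" using H(1) subgroup.one_closed by blast
  ultimately show False by simp
qed

lemma (in group) nat_pow_conj:
  assumes "h \<in> carrier G" "g \<in> carrier G"
  shows "(h \<otimes> g \<otimes> inv h) [^] (n::nat) = h \<otimes> g [^] n \<otimes> inv h"
proof (induction n)
  case 0
  show ?case using assms by simp
next
  case (Suc n)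
  have "(h \<otimes> g \<otimes> inv h) [^] Suc n = (h \<otimes> g [^] n \<otimes> inv h) \<otimes> (h \<otimes> g \<otimes> inv h)"
    using Suc by simp
  also have "\<dots> = h \<otimes> (g [^] n \<otimes> g) \<otimes> inv h"
    using assms by (simp add: m_assoc)
  finally show ?case by simp
qed

text \<open>Modulo \<open>K\<close> the elements \<open>g\<close> and \<open>y\<close> commute, so \<open>(g y)\<^sup>n \<equiv> g\<^sup>n y\<^sup>n\<close>.\<close>

lemma (in group) nat_pow_in_normal_if_commutator_in:
  assumes K: "K \<lhd> G" and y: "y \<in> carrier G" and g: "g \<in> carrier G"
    and comm: "y \<otimes> g \<otimes> inv y \<otimes> inv g \<in> K"
    and g_pow: "g [^] (n::nat) = \<one>" and gy_pow: "(g \<otimes> y) [^] n = \<one>"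
  shows "y [^] n \<in> K"
proof -
  interpret K: normal K G using K .
  have "K #> (y \<otimes> g) = K #> (y \<otimes> g \<otimes> inv y \<otimes> inv g) #> (g \<otimes> y)"
    using y g K.subset by (simp add: coset_mult_assoc m_assoc)
  also have "\<dots> = K #> (g \<otimes> y)" using comm K.rcos_const by simp
  finally have coset_commute: "K #> (y \<otimes> g) = K #> (g \<otimes> y)" .
  interpret Q: group "G Mod K" using K.factorgroup_is_group .
  interpret \<pi>: group_hom G "G Mod K" "\<lambda>a. K #> a"
    using K.r_coset_hom_Mod by unfold_locales
  have commute: "(K #> g) \<otimes>\<^bsub>G Mod K\<^esub> (K #> y) = (K #> y) \<otimes>\<^bsub>G Mod K\<^esub> (K #> g)"
    using coset_commute \<pi>.hom_mult[OF g y] \<pi>.hom_mult[OF y g] by simp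
  have "K #> (y [^] n) = (K #> (g [^] n)) \<otimes>\<^bsub>G Mod K\<^esub> (K #> (y [^] n))"
    using g_pow y by (metis \<pi>.hom_one \<pi>.hom_closed Q.l_one nat_pow_closed)
  also have "\<dots> = (K #> g) [^]\<^bsub>G Mod K\<^esub> n \<otimes>\<^bsub>G Mod K\<^esub> (K #> y) [^]\<^bsub>G Mod K\<^esub> n"
    using g y by (simp only: \<pi>.hom_nat_pow)
  also have "\<dots> = ((K #> g) \<otimes>\<^bsub>G Mod K\<^esub> (K #> y)) [^]\<^bsub>G Mod K\<^esub> n"
    using Q.pow_mult_distrib[OF commute] g y by simp
  also have "\<dots> = \<one>\<^bsub>G Mod K\<^esub>"
    using g y gy_pow by (metis \<pi>.hom_mult \<pi>.hom_nat_pow \<pi>.hom_one m_closed)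
  finally have "K #> (y [^] n) = K" by simp
  then show ?thesis using coset_join1 K.subgroup_axioms y by auto
qed

lemma (in group) normal_nat_pow_eq_one_if_coset_nat_pow_eq_one:
  assumes nil: "lower_central G n = {\<one>}" and M: "M \<lhd> G" and g: "g \<in> carrier G"
    and g_pow: "g [^] (c::nat) = \<one>" and coset_pow: "\<And>y. y \<in> M \<Longrightarrow> (g \<otimes> y) [^] c = \<one>"
    and y: "y \<in> M"
  shows "y [^] (c ^ n) = \<one>"
proof -
  have "\<forall>y \<in> lower_central G i \<inter> M. y [^] (c ^ (n - i)) = \<one>" if "i \<le> n" for i
    using that
  proof (induction i rule: inc_induct)
    case base
    show ?case using nil by simp
  next
    case (step i)
    have K: "lower_central G (Suc i) \<inter> M \<lhd> G"
      using normal_subgroup_intersect[OF lower_central_normal M] .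
    show ?case
    proof
      fix y assume "y \<in> lower_central G i \<inter> M"
      then have y\<gamma>: "y \<in> lower_central G i" and yM: "y \<in> M" by auto
      then have yG: "y \<in> carrier G" using subgroup.mem_carrier[OF normal_imp_subgroup[OF M]] by blast
      have "y \<otimes> g \<otimes> inv y \<otimes> inv g \<in> lower_central G (Suc i) \<inter> M"
        using commutator_in_lower_central_Suc[OF y\<gamma> g] commutator_in_normal[OF M yM g] by blast
      then have "y [^] c \<in> lower_central G (Suc i) \<inter> M"
        by (rule nat_pow_in_normal_if_commutator_in[OF K yG g _ g_pow coset_pow[OF yM]])
      then have "(y [^] c) [^] (c ^ (n - Suc i)) = \<one>" using step.IH by blast
      moreover have "c * c ^ (n - Suc i) = c ^ (n - i)"
        using step.hyps by (simp add: Suc_diff_Suc flip: power_Suc)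
      ultimately show "y [^] (c ^ (n - i)) = \<one>" using yG by (simp add: nat_pow_pow)
    qed
  qed
  from this[of 0] show ?thesis
    using y subgroup.mem_carrier[OF normal_imp_subgroup[OF M]] by simp
qed

lemma (in group) exists_prime_power_order_notin:
  assumes fin: "finite (carrier G)" and N: "subgroup N G" and p: "Factorial_Ring.prime p"
    and p_dvd: "p dvd card (rcosets N)"
  shows "\<exists>g \<in> carrier G - N. \<exists>a. g [^] (p ^ a) = \<one>"
proof -
  define a where "a = multiplicity p (order G)"
  obtain m where "order G = p ^ a * m"
    using multiplicity_dvd[of p "order G"] a_def by (metis dvdE)
  then obtain P where P: "subgroup P G" "card P = p ^ a"
    using sylow_thm[OF p is_group _ fin] by blast
  have "\<not> P \<subseteq> N"
  proof
    assume "P \<subseteq> N"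
    interpret N: group "G\<lparr>carrier := N\<rparr>"
      using subgroup.subgroup_is_group[OF N] is_group by blast
    have "card P dvd card N"
      using N.lagrange[OF subgroup_incl[OF P(1) N \<open>P \<subseteq> N\<close>]]
      by (simp add: order_def) (metis dvd_triv_right)
    then have "p * p ^ a dvd card (rcosets N) * card N"
      using p_dvd P(2) mult_dvd_mono by metis
    then have "p ^ Suc a dvd order G" using lagrange[OF N] by (simp only: power_Suc)
    moreover have "order G \<noteq> 0" using fin by (auto simp: order_def)
    ultimately have "Suc a \<le> a"
      unfolding a_def using p by (intro multiplicity_geI) (auto simp: prime_def)
    then show False by simp
  qed
  then obtain g where g: "g \<in> P" "g \<notin> N" by blast
  have "g \<in> carrier G" using subgroup.mem_carrier[OF P(1) g(1)] .
  moreover have "g [^] (p ^ a) = \<one>"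
    using subgroup_nat_pow_card_eq_one[OF fin P(1) g(1)] P(2) by simp
  ultimately show ?thesis using g(2) by blast
qed

lemma (in group) card_normal_prime_power_if_conjugate_cosets:
  assumes fin: "finite (carrier G)" and nil: "lower_central G n = {\<one>}"
    and M: "M \<lhd> G" and N: "subgroup N G"
    and conj: "\<And>g m. g \<in> carrier G - N \<Longrightarrow> m \<in> M \<Longrightarrow> conjugate_in G g (g \<otimes> m)"
    and p: "Factorial_Ring.prime p" and p_dvd: "p dvd card (rcosets N)"
  shows "\<exists>k. card M = p ^ k"
proof -
  obtain g a where g: "g \<in> carrier G - N" and g_pow: "g [^] (p ^ a) = \<one>"
    using exists_prime_power_order_notin[OF fin N p p_dvd] by blast
  have coset_pow: "(g \<otimes> y) [^] (p ^ a) = \<one>" if y: "y \<in> M" for y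
  proof -
    obtain h where h: "h \<in> carrier G" "g \<otimes> y = h \<otimes> g \<otimes> inv h"
      using conj[OF g y] unfolding conjugate_in_def by blast
    then show ?thesis using g g_pow by (simp add: nat_pow_conj)
  qed
  interpret M: group "G\<lparr>carrier := M\<rparr>"
    using subgroup.subgroup_is_group[OF normal_imp_subgroup[OF M]] is_group by blast
  have "finite (carrier (G\<lparr>carrier := M\<rparr>))"
    using finite_subset[OF subgroup.subset[OF normal_imp_subgroup[OF M]] fin] by simp
  then have "\<exists>k. order (G\<lparr>carrier := M\<rparr>) = p ^ k"
  proof (rule M.order_prime_power_if_nat_pow_eq_one[OF _ p])
    fix y assume "y \<in> carrier (G\<lparr>carrier := M\<rparr>)"
    then have "y [^] (p ^ a) ^ n = \<one>"
      using normal_nat_pow_eq_one_if_coset_nat_pow_eq_one[OF nil M _ g_pow coset_pow] g by simp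
    then show "y [^]\<^bsub>G\<lparr>carrier := M\<rparr>\<^esub> (p ^ (a * n)) = \<one>\<^bsub>G\<lparr>carrier := M\<rparr>\<^esub>"
      by (simp add: power_mult flip: nat_pow_consistent)
  qed
  then show ?thesis by (simp add: order_def)
qed

lemma prime_power_pair_if_prime_divisors:
  fixes m n :: nat
  assumes "n \<noteq> 0" "n \<noteq> 1" "m \<noteq> 1"
    and prime_power: "\<And>q. Factorial_Ring.prime q \<Longrightarrow> q dvd n \<Longrightarrow> \<exists>k. m = q ^ k"
  shows "\<exists>p. Factorial_Ring.prime p \<and> (\<exists>k. m = p ^ k) \<and> (\<exists>j. n = p ^ j)"
proof -
  obtain p where p: "Factorial_Ring.prime p" "p dvd n" using prime_factor_nat assms(2) by blast
  then obtain k where k: "m = p ^ k" using prime_power by blast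
  with assms(3) have "k > 0" by (auto intro: gr0I)
  have "\<exists>j. n = p ^ j"
  proof (rule ccontr)
    assume "\<nexists>j. n = p ^ j"
    then obtain q where q: "Factorial_Ring.prime q" "q dvd n" "q \<noteq> p"
      using Ex_other_prime_factor[OF assms(1) _ p(1)] by auto
    then obtain j where "m = q ^ j" using prime_power by blast
    with k \<open>k > 0\<close> assms(3) show False
      using prime_power_inj'(1)[OF p(1) q(1)] q(3) by (metis gr0I power_0)
  qed
  then show ?thesis using p k by blast
qed

theorem mainTheorem14:
  fixes G :: "('a, 'b) monoid_scheme" and M N :: "'a set"
  assumes "nilpotent_group G"
    and "finite (carrier G)"
    and "M \<lhd> G" and "N \<lhd> G"
    and "M \<noteq> {\<one>\<^bsub>G\<^esub>}"
    and "M \<subseteq> N"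
    and "N \<noteq> carrier G"
    and "\<And>g m. g \<in> carrier G - N \<Longrightarrow> m \<in> M \<Longrightarrow> conjugate_in G g (g \<otimes>\<^bsub>G\<^esub> m)"
  shows "\<exists>p::nat. Factorial_Ring.prime p \<and> p_group p (G\<lparr>carrier := M\<rparr>) \<and> p_group p (G Mod N)"
proof -
  obtain n where G: "group G" and nil: "lower_central G n = {\<one>\<^bsub>G\<^esub>}"
    using assms(1) unfolding nilpotent_group_def by blast
  interpret group G by (rule G)
  interpret N: normal N G by (rule assms(4))
  interpret Q: group "G Mod N" by (rule N.factorgroup_is_group)
  have M: "subgroup M G" using normal_imp_subgroup[OF assms(3)] .
  have fin_index: "finite (carrier (G Mod N))" using assms(2) by (simp add: carrier_FactGroup)
  have "\<exists>p. Factorial_Ring.prime p \<and> (\<exists>k. card M = p ^ k) \<and> (\<exists>j. order (G Mod N) = p ^ j)"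
  proof (rule prime_power_pair_if_prime_divisors)
    show "order (G Mod N) \<noteq> 0" using fin_index Q.one_closed by (auto simp: order_def)
    show "order (G Mod N) \<noteq> 1"
      using N.fact_group_trivial_iff[OF assms(2)] assms(7) Q.one_closed
      by (metis card_1_singletonE order_def singletonD)
    show "card M \<noteq> 1"
      using assms(5) subgroup.one_closed[OF M] by (metis card_1_singletonE singletonD)
    show "\<exists>k. card M = q ^ k" if "Factorial_Ring.prime q" "q dvd order (G Mod N)" for q
      using card_normal_prime_power_if_conjugate_cosets[OF assms(2) nil assms(3)
          N.subgroup_axioms assms(8) that(1)] that(2) by (simp add: order_def FactGroup_def)
  qed
  moreover have "finite M" using finite_subset[OF subgroup.subset[OF M] assms(2)] .
  ultimately show ?thesis
    using subgroup.subgroup_is_group[OF M G] fin_index Q.is_group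
    unfolding p_group_def order_def by auto
qed

end
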